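(* Let $k\ge1$. The code $C=\Phi_R(\mathcal{S}_k^{\alpha})$ over $\mathbb{F}_q$ has length $q^{s(k+1)-1}$, has $q^{sk}$ codewords, and has minimum Hamming distance $q^{s(k+1)-2}(q-1)$. Moreover its Hamming weight enumerator is $W_C(X,Y)=A_\ell X^{n'-\ell}Y^\ell+X^{n'}$, where $n'=q^{s(k+1)-1}$, $A_\ell=q^{sk}-1$ and $\ell=q^{s(k+1)-2}(q-1)$.
   Context: Let $R$ be a finite commutative chain ring: a finite commutative ring with $1\neq0$ whose ideals form a single chain under inclusion. Its unique maximal ideal is principal, generated by some $\gamma$; let $s\ge1$ be the least integer with $\gamma^s=0$. The residue field $R/\langle\gamma\rangle$ is isomorphic to $\mathbb{F}_q$, $q$ a prime power, and $\bar r$ denotes the image of $r\in R$ in it. Fix a set $T=\{e_0,\dots,e_{q-1}\}\subseteq R$ of coset representatives of $R/\langle\gamma\rangle$ with $e_0=0$, $e_1=1$, ordered $e_0<\dots<e_{q-1}$. Every $r\in R$ has a unique $\gamma$-adic representation $r=\sum_{i=0}^{s-1}r_i\gamma^i$ with $r_i\in T$. Order $R$ by: $x>y$ iff $x_i>y_i$ in $T$ for the largest $i$ with $x_i\neq y_i$. List $R=\{\rho_0,\dots,\rho_{q^s-1}\}$ increasingly. For $a\in R$, $\mathbf{a}^{(m)}$ is the constant vector of length $m$. Define $G_1^\alpha=(\rho_0\ \rho_1\ \cdots\ \rho_{q^s-1})$ and, for $k>1$, $G_k^\alpha$ as the $k\times q^{sk}$ matrix of $q^s$ column blocks, the $j$-th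 block having first row $\boldsymbol{\rho_j}^{(q^{s(k-1)})}$ and a copy of $G_{k-1}^\alpha$ below it. $\mathcal{S}_k^\alpha$ is the $R$-submodule of $R^{q^{sk}}$ generated by the rows of $G_k^\alpha$. Gray map: let $M$ be the $s\times q^{s-1}$ matrix over $\mathbb{F}_q$ (a generator matrix of the first order $q$-ary Reed–Muller code of length $q^{s-1}$) whose columns are exactly the vectors $(v,1)^T$, $v\in\mathbb{F}_q^{s-1}$; define $\Phi_R:R\to\mathbb{F}_q^{q^{s-1}}$ by $\Phi_R(r)=(\bar r_0,\dots,\bar r_{s-1})M$ and extend it coordinatewise to $R^n\to\mathbb{F}_q^{nq^{s-1}}$. The Hamming weight enumerator of a code $C$ of length $n$ is $\sum_iA_iX^{n-i}Y^i$ with $A_i$ the number of codewords of Hamming weight $i$. *)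

theory Defs
  imports Complex_Main
begin

definition is_ideal :: "'a::comm_ring_1 set \<Rightarrow> bool" where
  "is_ideal I \<longleftrightarrow> 0 \<in> I \<and> (\<forall>x\<in>I. \<forall>y\<in>I. x + y \<in> I) \<and> (\<forall>r. \<forall>x\<in>I. r * x \<in> I)"

definition principal_ideal :: "'a::comm_ring_1 \<Rightarrow> 'a set" where
  "principal_ideal g = {r * g | r. True}"

definition is_maximal_ideal :: "'a::comm_ring_1 set \<Rightarrow> bool" where
  "is_maximal_ideal M \<longleftrightarrow> is_ideal M \<and> M \<noteq> UNIV \<and>
     (\<forall>J. is_ideal J \<and> M \<subseteq> J \<longrightarrow> J = M \<or> J = UNIV)"

definition chain_ring :: "'a::{comm_ring_1,finite} itself \<Rightarrow> bool" where
  "chain_ring _ \<longleftrightarrow> (\<forall>I J :: 'a set. is_ideal I \<and> is_ideal J \<longrightarrow> I \<subseteq> J \<or> J \<subseteq> I)"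

definition residue :: "'a::comm_ring_1 \<Rightarrow> 'a \<Rightarrow> 'a set" where
  "residue g a = {a + t * g | t. True}"

definition resq :: "'a::{comm_ring_1,finite} \<Rightarrow> nat" where
  "resq g = card (residue g ` UNIV)"

definition digits :: "'a::comm_ring_1 list \<Rightarrow> 'a \<Rightarrow> nat \<Rightarrow> 'a \<Rightarrow> 'a list" where
  "digits T g s r = (THE ds. length ds = s \<and> set ds \<subseteq> set T \<and> r = (\<Sum>i<s. ds ! i * g ^ i))"

text \<open>Position of an element of T (the order e_0 < e_1 < ... on T).\<close>
definition tidx :: "'a list \<Rightarrow> 'a \<Rightarrow> nat" where
  "tidx T e = (THE j. j < length T \<and> T ! j = e)"

definition R_less :: "'a::comm_ring_1 list \<Rightarrow> 'a \<Rightarrow> nat \<Rightarrow> 'a \<Rightarrow> 'a \<Rightarrow> bool" where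
  "R_less T g s x y \<longleftrightarrow> (\<exists>i<s. tidx T (digits T g s x ! i) < tidx T (digits T g s y ! i) \<and>
      (\<forall>j. i < j \<and> j < s \<longrightarrow> digits T g s x ! j = digits T g s y ! j))"

definition rho :: "'a::{comm_ring_1,finite} list \<Rightarrow> 'a \<Rightarrow> nat \<Rightarrow> nat \<Rightarrow> 'a" where
  "rho T g s j = (THE r. card {y. R_less T g s y r} = j)"

text \<open>Gm rh N k i c = entry (row i, column c) of G_k, with N = q^s and rh j = rho_j.\<close>
fun Gm :: "(nat \<Rightarrow> 'a::comm_ring_1) \<Rightarrow> nat \<Rightarrow> nat \<Rightarrow> nat \<Rightarrow> nat \<Rightarrow> 'a" where
  "Gm rh N 0 i c = 0"
| "Gm rh N (Suc 0) i c = rh c"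
| "Gm rh N (Suc (Suc k)) i c =
     (if i = 0 then rh (c div N ^ Suc k) else Gm rh N (Suc k) (i - 1) (c mod N ^ Suc k))"

definition S_mod :: "'a::{comm_ring_1,finite} list \<Rightarrow> 'a \<Rightarrow> nat \<Rightarrow> nat \<Rightarrow> 'a list set" where
  "S_mod T g s k = {map (\<lambda>c. \<Sum>i<k. a i * Gm (rho T g s) (resq g ^ s) k i c) [0..<resq g ^ (s * k)]
                    | a. True}"

text \<open>The m-th vector v in F_q^{s-1} (m < q^{s-1}), component i, via representatives in T.\<close>
definition fq_vec :: "'a list \<Rightarrow> nat \<Rightarrow> nat \<Rightarrow> nat \<Rightarrow> 'a" where
  "fq_vec T q m i = T ! ((m div q ^ i) mod q)"

text \<open>Phi_R(r) = (rbar_0,...,rbar_{s-1}) M, the column of M with index m being (v_m, 1).\<close>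
definition gray_R :: "'a::{comm_ring_1,finite} list \<Rightarrow> 'a \<Rightarrow> nat \<Rightarrow> 'a \<Rightarrow> 'a set list" where
  "gray_R T g s r = (let d = digits T g s r; q = resq g in
     map (\<lambda>m. residue g ((\<Sum>i<s - 1. d ! i * fq_vec T q m i) + d ! (s - 1))) [0..<q ^ (s - 1)])"

definition gray :: "'a::{comm_ring_1,finite} list \<Rightarrow> 'a \<Rightarrow> nat \<Rightarrow> 'a list \<Rightarrow> 'a set list" where
  "gray T g s x = concat (map (gray_R T g s) x)"

definition hwt :: "'b \<Rightarrow> 'b list \<Rightarrow> nat" where
  "hwt z c = card {i. i < length c \<and> c ! i \<noteq> z}"

definition hdist :: "'b list \<Rightarrow> 'b list \<Rightarrow> nat" where
  "hdist c d = card {i. i < length c \<and> c ! i \<noteq> d ! i}"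

definition min_dist :: "'b list set \<Rightarrow> nat" where
  "min_dist C = Min {hdist c d | c d. c \<in> C \<and> d \<in> C \<and> c \<noteq> d}"

definition weight_enum :: "'b \<Rightarrow> 'b list set \<Rightarrow> nat \<Rightarrow> real \<Rightarrow> real \<Rightarrow> real" where
  "weight_enum z C n X Y = (\<Sum>i\<le>n. real (card {c \<in> C. hwt z c = i}) * X ^ (n - i) * Y ^ i)"

end

theory Submission
  imports Defs
begin

text \<open>The columns of G_k run through R^k exactly once, so the codeword with coefficient vector a has the entries a . x, x in R^k.
  Digit by digit, the Gray map turns differences into the homogeneous weight w of R
  (w 0 = 0, w = q^(s-1) on the nonzero elements of the minimal ideal g^(s-1) R, and
  q^(s-1) - q^(s-2) elsewhere): d(Phi u, Phi v) = w (u - v). For a nonzero a there is an x1 with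
  a . x1 = g^(s-1), so translating x by t x1 shows that the sum of w (a . x) over R^k does not
  change when g^(s-1) t is added to every value; averaging over t, and using that w sums to
  (q - 1) q^(s-1) on every coset of g^(s-1) R, this sum is q^(sk+s-2) (q - 1) for every a /= 0.
  Hence the Gray image is an equidistant code containing the zero word, which determines its
  size, minimum distance and weight enumerator.\<close>

section \<open>Hamming distance and equidistant codes\<close>

lemma hdist_append:
  assumes "length a = length c"
  shows "hdist (a @ b) (c @ d) = hdist a c + hdist b d"
proof -
  let ?A = "{i. i < length a \<and> a ! i \<noteq> c ! i}"
  let ?B = "{i. i < length b \<and> b ! i \<noteq> d ! i}"
  have "{i. i < length (a @ b) \<and> (a @ b) ! i \<noteq> (c @ d) ! i} = ?A \<union> (\<lambda>i. i + length a) ` ?B"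
  proof (rule set_eqI)
    fix i
    show "i \<in> {i. i < length (a @ b) \<and> (a @ b) ! i \<noteq> (c @ d) ! i} \<longleftrightarrow> i \<in> ?A \<union> (\<lambda>i. i + length a) ` ?B"
    proof (cases "i < length a")
      case True
      then show ?thesis using assms by (auto simp: nth_append)
    next
      case False
      then have "i \<in> (\<lambda>i. i + length a) ` ?B \<longleftrightarrow> i - length a \<in> ?B"
        by (auto intro: rev_image_eqI[of "i - length a"])
      then show ?thesis using False assms by (auto simp: nth_append)
    qed
  qed
  moreover have "?A \<inter> (\<lambda>i. i + length a) ` ?B = {}" by auto
  moreover have "card ((\<lambda>i. i + length a) ` ?B) = card ?B" by (simp add: card_image)
  ultimately show ?thesis unfolding hdist_def by (simp add: card_Un_disjoint)
qed

lemma hwt_eq_hdist_replicate: "hwt z c = hdist c (replicate (length c) z)"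
  unfolding hwt_def hdist_def by (intro arg_cong[where f = card] Collect_cong) auto

lemma hdist_self: "hdist c c = 0"
  unfolding hdist_def by simp

lemma min_dist_equidistant:
  assumes "c \<in> C" "d \<in> C" "c \<noteq> d"
    and "\<And>c d. c \<in> C \<Longrightarrow> d \<in> C \<Longrightarrow> c \<noteq> d \<Longrightarrow> hdist c d = w"
  shows "min_dist C = w"
proof -
  have "{hdist c d | c d. c \<in> C \<and> d \<in> C \<and> c \<noteq> d} = {w}"
    using assms by blast
  then show ?thesis unfolding min_dist_def by simp
qed

lemma weight_enum_equidistant:
  assumes fin: "finite C" and zero: "replicate n z \<in> C" and len: "\<forall>c\<in>C. length c = n"
    and equi: "\<And>c d. c \<in> C \<Longrightarrow> d \<in> C \<Longrightarrow> c \<noteq> d \<Longrightarrow> hdist c d = w"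
    and w: "0 < w" "w \<le> n"
  shows "weight_enum z C n X Y = real (card C - 1) * X ^ (n - w) * Y ^ w + X ^ n"
proof -
  have wt: "hwt z c = (if c = replicate n z then 0 else w)" if "c \<in> C" for c
    using that len equi[OF that zero] by (simp add: hwt_eq_hdist_replicate hdist_self)
  have "{c \<in> C. hwt z c = 0} = {replicate n z}" "{c \<in> C. hwt z c = w} = C - {replicate n z}"
    "i \<noteq> 0 \<Longrightarrow> i \<noteq> w \<Longrightarrow> {c \<in> C. hwt z c = i} = {}" for i
    using wt zero w by (auto split: if_splits)
  then have count: "card {c \<in> C. hwt z c = i}
      = (if i = 0 then 1 else if i = w then card C - 1 else 0)" for i
    using fin zero w by (simp add: card_Diff_singleton)
  let ?f = "\<lambda>i. real (card {c \<in> C. hwt z c = i}) * X ^ (n - i) * Y ^ i"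
  have "weight_enum z C n X Y = (\<Sum>i\<in>{0, w}. ?f i)"
    unfolding weight_enum_def by (rule sum.mono_neutral_right) (use count w in auto)
  also have "\<dots> = X ^ n + real (card C - 1) * X ^ (n - w) * Y ^ w"
    using w by (simp add: count)
  finally show ?thesis by simp
qed

lemma card_filter_lessThan_eq_sum:
  fixes N :: nat
  shows "card {m. m < N \<and> P m} = (\<Sum>m<N. if P m then 1 else 0)"
proof -
  have "{m. m < N \<and> P m} = {m \<in> {..<N}. P m}" by auto
  then have "card {m. m < N \<and> P m} = (\<Sum>m\<in>{m \<in> {..<N}. P m}. 1)"
    by (simp only: card_eq_sum)
  also have "\<dots> = (\<Sum>m<N. if P m then 1 else 0)"
    by (rule sum.inter_filter) simp
  finally show ?thesis .
qed

lemma card_filter_lessThan_mult: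
  fixes Q k :: nat
  shows "card {m. m < Q * k \<and> P m} = (\<Sum>m'<Q. card {j. j < k \<and> P (m' * k + j)})"
proof -
  have block: "(\<Sum>i\<in>{a..<a + k}. f i) = (\<Sum>j<k. f (a + j))" for a and f :: "nat \<Rightarrow> nat"
    using sum.shift_bounds_nat_ivl[of f 0 a k] by (simp add: atLeast0LessThan add.commute)
  show ?thesis
    unfolding card_filter_lessThan_eq_sum sum.nat_group[symmetric] block by (simp add: mult.commute)
qed

lemma card_filter_lessThan_mult':
  fixes Q k :: nat
  shows "card {m. m < Q * k \<and> P m} = (\<Sum>j<k. card {m'. m' < Q \<and> P (m' * k + j)})"
  unfolding card_filter_lessThan_mult card_filter_lessThan_eq_sum by (rule sum.swap)

lemma bij_betw_rank_enumeration:
  fixes less :: "'a::finite \<Rightarrow> 'a \<Rightarrow> bool"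
  assumes irrefl: "\<And>x. \<not> less x x"
    and trans: "\<And>x y z. less x y \<Longrightarrow> less y z \<Longrightarrow> less x z"
    and total: "\<And>x y. x \<noteq> y \<Longrightarrow> less x y \<or> less y x"
  shows "bij_betw (\<lambda>j. THE r. card {y. less y r} = j) {0..<card (UNIV :: 'a set)} UNIV"
proof -
  define rank where "rank r = card {y. less y r}" for r
  have rank_less: "rank x < rank y" if "less x y" for x y
    unfolding rank_def by (rule psubset_card_mono) (simp, use that irrefl trans in blast)
  have "inj rank"
    by (rule injI) (metis rank_less total less_irrefl)
  moreover have "rank ` UNIV = {0..<card (UNIV :: 'a set)}"
  proof (rule card_subset_eq)
    have "rank r < card (UNIV :: 'a set)" for r
      unfolding rank_def using irrefl[of r] by (intro psubset_card_mono) auto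
    then show "rank ` UNIV \<subseteq> {0..<card (UNIV :: 'a set)}" by auto
    show "card (rank ` UNIV) = card {0..<card (UNIV :: 'a set)}"
      using \<open>inj rank\<close> by (simp add: card_image)
  qed simp
  ultimately have "bij_betw rank UNIV {0..<card (UNIV :: 'a set)}"
    unfolding bij_betw_def by blast
  moreover have "(THE r. rank r = j) = the_inv rank j" for j
    unfolding the_inv_into_def by simp
  ultimately show ?thesis
    unfolding rank_def[symmetric] by (simp add: bij_betw_the_inv_into)
qed

section \<open>Finite chain rings\<close>

primrec horner :: "'a::comm_ring_1 \<Rightarrow> 'a list \<Rightarrow> 'a" where
  "horner g [] = 0"
| "horner g (d # ds) = d + g * horner g ds"

lemma horner_eq_sum: "horner g ds = (\<Sum>i<length ds. ds ! i * g ^ i)"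
proof (induction ds)
  case (Cons d ds)
  have "(\<Sum>i<length (d # ds). (d # ds) ! i * g ^ i) = d + g * (\<Sum>i<length ds. ds ! i * g ^ i)"
    by (simp add: sum.lessThan_Suc_shift del: sum.lessThan_Suc) (simp add: sum_distrib_left mult_ac)
  then show ?case using Cons by simp
qed simp

definition lin_comb :: "nat \<Rightarrow> (nat \<Rightarrow> 'a::comm_ring_1) \<Rightarrow> 'a list \<Rightarrow> 'a" where
  "lin_comb k a xs = (\<Sum>i<k. a i * xs ! i)"

lemma lin_comb_diff: "lin_comb k a x - lin_comb k b x = lin_comb k (\<lambda>i. a i - b i) x"
  unfolding lin_comb_def by (simp add: sum_subtractf left_diff_distrib)

lemma principal_ideal_eq_multiples: "principal_ideal g = {x. g dvd x}"
  unfolding principal_ideal_def by (auto simp: dvd_def mult.commute)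

lemma residue_eq_iff_dvd: "residue g a = residue g b \<longleftrightarrow> g dvd a - b"
proof
  assume "residue g a = residue g b"
  moreover have "a \<in> residue g a" unfolding residue_def by (auto intro: exI[of _ 0])
  ultimately obtain t where "a = b + t * g" unfolding residue_def by auto
  then show "g dvd a - b" by simp
next
  assume "g dvd a - b"
  then obtain t where t: "a = b + g * t" by (metis dvd_def diff_add_cancel add.commute)
  have "{a + u * g |u. True} = {b + u * g |u. True}"
  proof (intro set_eqI iffI)
    fix x assume "x \<in> {a + u * g |u. True}"
    then obtain u where "x = b + (t + u) * g" using t by (auto simp: algebra_simps)
    then show "x \<in> {b + u * g |u. True}" by blast
  next
    fix x assume "x \<in> {b + u * g |u. True}"
    then obtain u where "x = a + (u - t) * g" using t by (auto simp: algebra_simps)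
    then show "x \<in> {a + u * g |u. True}" by blast
  qed
  then show "residue g a = residue g b" unfolding residue_def .
qed

lemma is_ideal_principal_ideal: "is_ideal (principal_ideal x)"
  unfolding is_ideal_def principal_ideal_eq_multiples by auto

lemma chain_ring_nonmultiple_dvd_one:
  assumes "chain_ring TYPE('a::{comm_ring_1,finite})"
    and "is_maximal_ideal (principal_ideal g)" and "\<not> g dvd (x :: 'a)"
  shows "x dvd 1"
proof -
  have x_in: "x \<in> principal_ideal x" and "x \<notin> principal_ideal g"
    using assms(3) by (auto simp: principal_ideal_eq_multiples)
  then have "principal_ideal g \<subseteq> principal_ideal x"
    using assms(1) is_ideal_principal_ideal unfolding chain_ring_def by blast
  then have "principal_ideal x = UNIV"
    using assms(2) is_ideal_principal_ideal x_in \<open>x \<notin> principal_ideal g\<close>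
    unfolding is_maximal_ideal_def by blast
  then show ?thesis by (auto simp: principal_ideal_eq_multiples)
qed

locale finite_chain_ring =
  fixes g :: "'a::{comm_ring_1,finite}" and s :: nat
  assumes nonmultiple_dvd_one: "\<not> g dvd x \<Longrightarrow> x dvd 1"
    and nilpotent: "g ^ s = 0"
    and power_nonzero: "i < s \<Longrightarrow> g ^ i \<noteq> 0"
begin

abbreviation q where "q \<equiv> resq g"

lemma s_pos: "0 < s"
  using nilpotent by (cases s) auto

lemma not_dvd_one: "\<not> g dvd 1"
proof
  assume "g dvd 1"
  then obtain v where "1 = g * v" by (rule dvdE)
  then have "1 = g ^ s * v ^ s" by (metis power_mult_distrib power_one)
  then show False using nilpotent by simp
qed

lemma unit_mult_eq_0: "u dvd 1 \<Longrightarrow> a * u = 0 \<Longrightarrow> a = (0::'a)"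
  by (metis dvdE mult.assoc mult_1_right mult_zero_left)

lemma q_ge_2: "q \<ge> 2"
proof -
  have "residue g 1 \<noteq> residue g 0"
    using not_dvd_one by (simp add: residue_eq_iff_dvd)
  then have "card {residue g 0, residue g 1} = 2" by simp
  moreover have "{residue g 0, residue g 1} \<subseteq> residue g ` UNIV" by auto
  ultimately show ?thesis unfolding resq_def by (metis card_mono finite)
qed

lemma nonzero_eq_power_mult_unit:
  assumes "y \<noteq> 0"
  obtains j u where "j < s" "u dvd 1" "y = g ^ j * u"
proof -
  define J where "J = {j. j \<le> s \<and> g ^ j dvd y}"
  have "finite J" "0 \<in> J" unfolding J_def by auto
  define j where "j = Max J"
  have "j \<in> J" unfolding j_def using \<open>finite J\<close> \<open>0 \<in> J\<close> by (intro Max_in) auto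
  then obtain u where u: "y = g ^ j * u" and "j \<le> s" unfolding J_def by auto
  have "j < s" using u nilpotent assms \<open>j \<le> s\<close> by (cases "j = s") auto
  have "\<not> g dvd u"
  proof
    assume "g dvd u"
    then have "g ^ Suc j dvd y" unfolding u power_Suc2 by (rule mult_dvd_mono[OF dvd_refl])
    then have "Suc j \<in> J" unfolding J_def using \<open>j < s\<close> by simp
    then show False using Max_ge[OF \<open>finite J\<close>] unfolding j_def[symmetric] by fastforce
  qed
  then show ?thesis using that \<open>j < s\<close> u nonmultiple_dvd_one by blast
qed

lemma annihilator_of_generator: "g * z = 0 \<Longrightarrow> g ^ (s - 1) dvd z"
proof (cases "z = 0")
  case False
  assume gz: "g * z = 0"
  obtain j u where j: "j < s" "u dvd 1" "z = g ^ j * u"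
    using nonzero_eq_power_mult_unit[OF False] .
  then have "g ^ Suc j * u = 0" using gz by (simp add: mult.assoc)
  then have "\<not> Suc j < s" using power_nonzero unit_mult_eq_0 j(2) by blast
  then have "j = s - 1" using j(1) by simp
  then show ?thesis using j(3) by simp
qed simp

lemma power_pred_mult_eq_0_iff: "g ^ (s - 1) * z = 0 \<longleftrightarrow> g dvd z"
proof
  assume "g ^ (s - 1) * z = 0"
  then show "g dvd z"
    using nonmultiple_dvd_one unit_mult_eq_0 power_nonzero[of "s - 1"] s_pos
    by (metis diff_less zero_less_one)
next
  assume "g dvd z"
  then obtain t where "z = g * t" by (rule dvdE)
  moreover have "g ^ (s - 1) * g = g ^ s" using s_pos by (metis Suc_pred' power_Suc2)
  ultimately have "g ^ (s - 1) * z = g ^ s * t" by (metis mult.assoc)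
  then show "g ^ (s - 1) * z = 0" using nilpotent by simp
qed

lemma lin_comb_hits_power_pred:
  assumes "i0 < k" "a i0 \<noteq> 0"
  obtains x where "length x = k" "lin_comb k a x = g ^ (s - 1)"
proof -
  obtain j u where j: "j < s" "u dvd 1" "a i0 = g ^ j * u"
    using nonzero_eq_power_mult_unit[OF assms(2)] .
  from j(2) obtain v where v: "1 = u * v" by (rule dvdE)
  define x where "x = map (\<lambda>i. if i = i0 then g ^ (s - 1 - j) * v else 0) [0..<k]"
  have "lin_comb k a x = (\<Sum>i<k. if i = i0 then a i0 * (g ^ (s - 1 - j) * v) else 0)"
    unfolding lin_comb_def x_def by (rule sum.cong) auto
  also have "\<dots> = g ^ (j + (s - 1 - j)) * (u * v)"
    using assms(1) j(3) by (simp add: power_add mult_ac)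
  also have "\<dots> = g ^ (s - 1)" using j(1) v by simp
  finally show ?thesis using that[of x] by (simp add: x_def)
qed

end

section \<open>Digits and the enumeration of R\<close>

locale chain_ring_digits = finite_chain_ring +
  fixes T :: "'a list"
  assumes T_distinct: "distinct T"
    and T_residues: "\<forall>r. \<exists>!e. e \<in> set T \<and> residue g e = residue g r"
    and T_zero: "T ! 0 = 0"
begin

lemma T_eq_if_dvd_diff:
  assumes "e \<in> set T" "e' \<in> set T" "g dvd e - e'"
  shows "e = e'"
proof -
  have "residue g e = residue g e'" using assms(3) by (simp add: residue_eq_iff_dvd)
  then show ?thesis using T_residues assms(1,2) by blast
qed

lemma T_representative:
  obtains e where "e \<in> set T" "g dvd r - e"
proof -
  obtain e where "e \<in> set T" "residue g e = residue g r" using T_residues by blast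
  moreover have "r - e = - (e - r)" by simp
  ultimately show ?thesis using that by (metis residue_eq_iff_dvd dvd_minus_iff)
qed

lemma length_T: "length T = q"
proof -
  have "inj_on (residue g) (set T)"
    by (rule inj_onI) (simp add: T_eq_if_dvd_diff residue_eq_iff_dvd)
  moreover have "residue g ` set T = residue g ` UNIV"
    using T_residues by (auto simp: image_iff) metis
  ultimately show ?thesis
    unfolding resq_def by (metis card_image T_distinct distinct_card)
qed

lemma zero_in_T: "0 \<in> set T"
proof -
  have "0 < length T" using length_T q_ge_2 by simp
  then show ?thesis using T_zero nth_mem by metis
qed

abbreviation dg where "dg \<equiv> digits T g s"

lemma horner_digits_exist:
  obtains ds where "length ds = n" "set ds \<subseteq> set T" "g ^ n dvd r - horner g ds"
proof (induction n arbitrary: r thesis)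
  case 0 show ?case by (rule "0"[of "[]"]) simp_all
next
  case (Suc n)
  obtain e where e: "e \<in> set T" "g dvd r - e" by (rule T_representative)
  from e(2) obtain t where t: "r - e = g * t" by (rule dvdE)
  obtain ds where ds: "length ds = n" "set ds \<subseteq> set T" "g ^ n dvd t - horner g ds"
    by (rule Suc.IH)
  have "r - horner g (e # ds) = g * (t - horner g ds)" using t by (simp add: algebra_simps)
  then have "g ^ Suc n dvd r - horner g (e # ds)" using ds(3) by (simp add: mult_dvd_mono)
  then show ?case using ds e by (intro Suc.prems[of "e # ds"]) auto
qed

lemma take_eq_if_horner_congruent:
  "length ds = n \<Longrightarrow> length es = n \<Longrightarrow> set ds \<subseteq> set T \<Longrightarrow> set es \<subseteq> set T \<Longrightarrow> n \<le> s
   \<Longrightarrow> m \<le> n \<Longrightarrow> g ^ m dvd horner g ds - horner g es \<Longrightarrow> take m ds = take m es"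
proof (induction ds arbitrary: n es m)
  case (Cons d ds)
  obtain e es' where es: "es = e # es'" using Cons.prems(1,2) by (cases es) auto
  show ?case
  proof (cases m)
    case (Suc m')
    let ?A = "horner g ds" and ?B = "horner g es'"
    from Cons.prems(7) obtain t where "horner g (d # ds) - horner g es = g ^ Suc m' * t"
      unfolding Suc by (rule dvdE)
    then have eq: "(d - e) + g * (?A - ?B) = g * (g ^ m' * t)" using es by (simp add: algebra_simps)
    then have "g dvd d - e" by (metis dvd_add_left_iff dvd_triv_left)
    then have de: "d = e" using T_eq_if_dvd_diff Cons.prems(3,4) es by simp
    then have "g * (?A - ?B - g ^ m' * t) = 0" using eq by (simp add: algebra_simps)
    from annihilator_of_generator[OF this]
    obtain t' where t': "?A - ?B - g ^ m' * t = g ^ (s - 1) * t'" by (rule dvdE)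
    have "m' \<le> s - 1" using Cons.prems(1,5,6) Suc by simp
    then have "g ^ m' dvd g ^ (s - 1)" by (rule le_imp_power_dvd)
    then have "g ^ m' dvd ?A - ?B" using t' by (metis diff_add_cancel dvd_add dvd_mult2 dvd_triv_left)
    then have "take m' ds = take m' es'"
      using Cons.IH[of "n - 1" es' m'] Cons.prems es Suc by auto
    then show ?thesis using de es Suc by simp
  qed simp
qed simp

lemma digits_spec: "length (dg r) = s \<and> set (dg r) \<subseteq> set T \<and> horner g (dg r) = r"
proof -
  have sum_form: "(length ds = s \<and> set ds \<subseteq> set T \<and> r = (\<Sum>i<s. ds ! i * g ^ i)) \<longleftrightarrow>
      (length ds = s \<and> set ds \<subseteq> set T \<and> r = horner g ds)" for ds
    by (auto simp: horner_eq_sum)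
  obtain ds where ds: "length ds = s" "set ds \<subseteq> set T" "g ^ s dvd r - horner g ds"
    by (rule horner_digits_exist)
  then have "length ds = s \<and> set ds \<subseteq> set T \<and> r = horner g ds" using nilpotent by simp
  moreover have "ds' = es" if "length ds' = s \<and> set ds' \<subseteq> set T \<and> r = horner g ds'"
      "length es = s \<and> set es \<subseteq> set T \<and> r = horner g es" for ds' es
    using take_eq_if_horner_congruent[of ds' s es s] that nilpotent by auto
  ultimately have "\<exists>!ds. length ds = s \<and> set ds \<subseteq> set T \<and> r = (\<Sum>i<s. ds ! i * g ^ i)"
    unfolding sum_form by blast
  then have "length (dg r) = s \<and> set (dg r) \<subseteq> set T \<and> r = (\<Sum>i<s. dg r ! i * g ^ i)"
    unfolding digits_def by (rule theI')
  then show ?thesis unfolding sum_form by simp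
qed

lemma length_digits [simp]: "length (dg r) = s"
  and set_digits: "set (dg r) \<subseteq> set T"
  and horner_digits [simp]: "horner g (dg r) = r"
  using digits_spec by blast+

lemma digit_in_T: "i < s \<Longrightarrow> dg r ! i \<in> set T"
  using set_digits by (metis length_digits nth_mem subsetD)

lemma digits_eqI: "length ds = s \<Longrightarrow> set ds \<subseteq> set T \<Longrightarrow> horner g ds = r \<Longrightarrow> dg r = ds"
  using take_eq_if_horner_congruent[of "dg r" s ds s] set_digits nilpotent by auto

lemma digits_inj: "dg u = dg w \<Longrightarrow> u = w"
  by (metis horner_digits)

lemma digits_zero: "dg 0 = replicate s 0"
proof (rule digits_eqI)
  have "horner g (replicate n 0) = 0" for n by (induction n) auto
  then show "horner g (replicate s 0) = 0" .
qed (use zero_in_T in auto)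

lemma power_pred_dvd_diff_iff_digits:
  "g ^ (s - 1) dvd u - w \<longleftrightarrow> (\<forall>i<s - 1. dg u ! i = dg w ! i)"
proof
  assume "g ^ (s - 1) dvd u - w"
  then have "take (s - 1) (dg u) = take (s - 1) (dg w)"
    by (intro take_eq_if_horner_congruent[of _ s]) (use set_digits in auto)
  then show "\<forall>i<s - 1. dg u ! i = dg w ! i" by (metis nth_take)
next
  assume agree: "\<forall>i<s - 1. dg u ! i = dg w ! i"
  have "s = Suc (s - 1)" using s_pos by simp
  have "u - w = horner g (dg u) - horner g (dg w)" by simp
  also have "\<dots> = (\<Sum>i<s. (dg u ! i - dg w ! i) * g ^ i)"
    by (simp only: horner_eq_sum length_digits sum_subtractf left_diff_distrib)
  also have "\<dots> = (dg u ! (s - 1) - dg w ! (s - 1)) * g ^ (s - 1)"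
    using agree by (subst \<open>s = Suc (s - 1)\<close>, subst sum.lessThan_Suc) simp
  finally show "g ^ (s - 1) dvd u - w" by simp
qed

lemma card_UNIV: "card (UNIV :: 'a set) = q ^ s"
proof -
  have "bij_betw dg UNIV {ds. set ds \<subseteq> set T \<and> length ds = s}"
  proof (rule bij_betwI')
    show "dg x \<in> {ds. set ds \<subseteq> set T \<and> length ds = s}" for x using set_digits by simp
    show "\<exists>x\<in>UNIV. y = dg x" if "y \<in> {ds. set ds \<subseteq> set T \<and> length ds = s}" for y
    proof -
      have "y = dg (horner g y)" using that by (intro digits_eqI[symmetric]) auto
      then show ?thesis by blast
    qed
  qed (metis digits_inj)
  then have "card (UNIV :: 'a set) = card {ds. set ds \<subseteq> set T \<and> length ds = s}"
    by (rule bij_betw_same_card)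
  also have "\<dots> = q ^ s"
    using card_lists_length_eq[of "set T" s] length_T T_distinct by (simp add: distinct_card)
  finally show ?thesis .
qed

lemma card_lists_length: "card {xs :: 'a list. length xs = k} = q ^ (s * k)"
  using card_lists_length_eq[of "UNIV :: 'a set" k] by (simp add: card_UNIV power_mult)

lemma tidx_nth: "e \<in> set T \<Longrightarrow> T ! tidx T e = e"
  unfolding tidx_def by (rule theI'[THEN conjunct2]) (rule distinct_Ex1[OF T_distinct])

lemma tidx_inj: "e \<in> set T \<Longrightarrow> e' \<in> set T \<Longrightarrow> tidx T e = tidx T e' \<Longrightarrow> e = e'"
  by (metis tidx_nth)

abbreviation R_lt where "R_lt \<equiv> R_less T g s"

lemma R_less_irrefl: "\<not> R_lt x x"
  unfolding R_less_def by auto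

lemma R_less_trans:
  assumes "R_lt x y" "R_lt y z"
  shows "R_lt x z"
proof -
  obtain i where i: "i < s" "tidx T (dg x ! i) < tidx T (dg y ! i)"
      "\<forall>j. i < j \<and> j < s \<longrightarrow> dg x ! j = dg y ! j"
    using assms(1) unfolding R_less_def by blast
  obtain k where k: "k < s" "tidx T (dg y ! k) < tidx T (dg z ! k)"
      "\<forall>j. k < j \<and> j < s \<longrightarrow> dg y ! j = dg z ! j"
    using assms(2) unfolding R_less_def by blast
  consider "i = k" | "i < k" | "k < i" by linarith
  then show ?thesis
  proof cases
    case 1
    then show ?thesis unfolding R_less_def using i k by (intro exI[of _ i]) auto
  next
    case 2
    then show ?thesis unfolding R_less_def using i k by (intro exI[of _ k]) auto
  next
    case 3
    then show ?thesis unfolding R_less_def using i k by (intro exI[of _ i]) auto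
  qed
qed

lemma R_less_total:
  assumes "x \<noteq> y"
  shows "R_lt x y \<or> R_lt y x"
proof -
  define D where "D = {i. i < s \<and> dg x ! i \<noteq> dg y ! i}"
  have "dg x \<noteq> dg y" using assms digits_inj by blast
  then have "D \<noteq> {}" unfolding D_def using nth_equalityI[of "dg x" "dg y"] by auto
  moreover have "finite D" unfolding D_def by simp
  ultimately have i: "Max D < s" "dg x ! Max D \<noteq> dg y ! Max D"
    and above: "\<forall>j. Max D < j \<and> j < s \<longrightarrow> dg x ! j = dg y ! j"
    using Max_in Max_ge unfolding D_def by (fastforce simp: not_le[symmetric])+
  then have "tidx T (dg x ! Max D) \<noteq> tidx T (dg y ! Max D)"
    using tidx_inj digit_in_T by blast
  then show ?thesis unfolding R_less_def using i(1) above by (metis linorder_neqE_nat)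
qed

lemma rho_bij: "bij_betw (rho T g s) {0..<q ^ s} UNIV"
  using bij_betw_rank_enumeration[of R_lt, OF R_less_irrefl R_less_trans R_less_total]
  unfolding rho_def card_UNIV .

section \<open>The Gray map and the homogeneous weight\<close>

definition gray_form :: "nat \<Rightarrow> (nat \<Rightarrow> 'a) \<Rightarrow> nat \<Rightarrow> 'a" where
  "gray_form n \<delta> m = (\<Sum>i<n. \<delta> i * fq_vec T q m i)"

lemma gray_form_Suc:
  assumes "j < q"
  shows "gray_form (Suc n) \<delta> (m * q + j) = \<delta> 0 * T ! j + gray_form n (\<lambda>i. \<delta> (Suc i)) m"
proof -
  have "(m * q + j) div q ^ Suc i mod q = m div q ^ i mod q" for i
    using assms by (simp add: div_mult2_eq)
  then show ?thesis
    unfolding gray_form_def fq_vec_def sum.lessThan_Suc_shift using assms by simp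
qed

lemma card_unit_affine_zeros:
  assumes "\<not> g dvd d"
  shows "card {j. j < q \<and> g dvd d * T ! j + c} = 1"
proof -
  obtain v where v: "1 = d * v" using nonmultiple_dvd_one[OF assms] by (rule dvdE)
  obtain e where e: "e \<in> set T" "g dvd (- c * v) - e" by (rule T_representative)
  obtain j0 where j0: "j0 < q" "T ! j0 = e" using e(1) length_T by (metis in_set_conv_nth)
  have "d * e + c = - (d * ((- c * v) - e))"
    using v by (simp add: algebra_simps)
  then have sol: "g dvd d * T ! j0 + c" using e(2) j0(2) by (metis dvd_minus_iff dvd_mult)
  have "j = j0" if "j < q" "g dvd d * T ! j + c" for j
  proof -
    have "g dvd (d * T ! j + c) - (d * T ! j0 + c)" using that(2) sol by (rule dvd_diff)
    then have "g dvd v * ((d * T ! j + c) - (d * T ! j0 + c))" by (rule dvd_mult)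
    also have "v * ((d * T ! j + c) - (d * T ! j0 + c)) = (d * v) * (T ! j - T ! j0)"
      by (simp add: algebra_simps)
    also have "\<dots> = T ! j - T ! j0" using v by simp
    finally have "T ! j = T ! j0"
      using T_eq_if_dvd_diff that(1) j0(1) length_T by (metis nth_mem)
    then show "j = j0" using nth_eq_iff_index_eq[OF T_distinct] that(1) j0(1) length_T by simp
  qed
  then have "{j. j < q \<and> g dvd d * T ! j + c} = {j0}" using j0(1) sol by blast
  then show ?thesis by simp
qed

text \<open>Reading m < q^n as a point of F_q^n: a non-constant affine form vanishes at exactly q^(n-1)
  points.\<close>
lemma card_gray_form_zeros:
  "\<exists>i<n. \<not> g dvd \<delta> i \<Longrightarrow> card {m. m < q ^ n \<and> g dvd gray_form n \<delta> m + c} = q ^ (n - 1)"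
proof (induction n arbitrary: \<delta> c)
  case (Suc n)
  let ?\<delta>' = "\<lambda>i. \<delta> (Suc i)"
  have split: "g dvd gray_form (Suc n) \<delta> (m * q + j) + c \<longleftrightarrow> g dvd \<delta> 0 * T ! j + (gray_form n ?\<delta>' m + c)"
    "g dvd gray_form (Suc n) \<delta> (m * q + j) + c \<longleftrightarrow> g dvd gray_form n ?\<delta>' m + (\<delta> 0 * T ! j + c)"
    if "j < q" for m j
    using gray_form_Suc[OF that] by (simp_all add: ac_simps)
  show ?case
  proof (cases "g dvd \<delta> 0")
    case False
    have "card {m. m < q ^ Suc n \<and> g dvd gray_form (Suc n) \<delta> m + c}
        = (\<Sum>m<q ^ n. card {j. j < q \<and> g dvd \<delta> 0 * T ! j + (gray_form n ?\<delta>' m + c)})"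
      unfolding power_Suc2 card_filter_lessThan_mult using split(1)
      by (intro sum.cong refl arg_cong[where f = card]) blast
    then show ?thesis using card_unit_affine_zeros[OF False] by simp
  next
    case True
    then obtain i where i: "i < n" "\<not> g dvd ?\<delta>' i"
      using Suc.prems by (metis less_Suc_eq_0_disj)
    then have IH: "card {m. m < q ^ n \<and> g dvd gray_form n ?\<delta>' m + c'} = q ^ (n - 1)" for c'
      by (intro Suc.IH) blast
    have "card {m. m < q ^ Suc n \<and> g dvd gray_form (Suc n) \<delta> m + c}
        = (\<Sum>j<q. card {m. m < q ^ n \<and> g dvd gray_form n ?\<delta>' m + (\<delta> 0 * T ! j + c)})"
      unfolding power_Suc2 card_filter_lessThan_mult' using split(2)
      by (intro sum.cong refl arg_cong[where f = card]) blast
    also have "\<dots> = q * q ^ (n - 1)" by (simp add: IH)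
    finally show ?thesis using i(1) by (simp add: power_eq_if)
  qed
qed simp

text \<open>The homogeneous weight of R, normalised so that it sums to (q - 1) q^(s-1) over every coset
  of the minimal ideal g^(s-1) R.\<close>
definition hom_weight :: "'a \<Rightarrow> nat" where
  "hom_weight r = (if r = 0 then 0 else if g ^ (s - 1) dvd r then q ^ (s - 1)
                   else q ^ (s - 1) - q ^ (s - 2))"

lemma length_gray_R [simp]: "length (gray_R T g s r) = q ^ (s - 1)"
  unfolding gray_R_def Let_def by simp

lemma gray_R_nth:
  "m < q ^ (s - 1) \<Longrightarrow>
   gray_R T g s r ! m = residue g (gray_form (s - 1) (\<lambda>i. dg r ! i) m + dg r ! (s - 1))"
  unfolding gray_R_def Let_def gray_form_def by simp

lemma digit_dvd_diff_iff: "i < s \<Longrightarrow> g dvd dg u ! i - dg w ! i \<longleftrightarrow> dg u ! i = dg w ! i"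
  using T_eq_if_dvd_diff digit_in_T by auto

lemma hdist_gray_R_eq_card:
  "hdist (gray_R T g s u) (gray_R T g s w) = q ^ (s - 1) -
     card {m. m < q ^ (s - 1) \<and> g dvd gray_form (s - 1) (\<lambda>i. dg u ! i - dg w ! i) m
                                          + (dg u ! (s - 1) - dg w ! (s - 1))}"
    (is "_ = _ - card ?Z")
proof -
  have diff: "gray_form (s - 1) (\<lambda>i. dg u ! i) m + dg u ! (s - 1)
      - (gray_form (s - 1) (\<lambda>i. dg w ! i) m + dg w ! (s - 1))
      = gray_form (s - 1) (\<lambda>i. dg u ! i - dg w ! i) m + (dg u ! (s - 1) - dg w ! (s - 1))" for m
    unfolding gray_form_def by (simp add: sum_subtractf[symmetric] algebra_simps)
  have "hdist (gray_R T g s u) (gray_R T g s w) = card {m. m < q ^ (s - 1) \<and> m \<notin> ?Z}"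
    unfolding hdist_def length_gray_R using diff
    by (intro arg_cong[where f = card] Collect_cong conj_cong refl)
      (simp only: gray_R_nth residue_eq_iff_dvd diff mem_Collect_eq simp_thms)
  also have "{m. m < q ^ (s - 1) \<and> m \<notin> ?Z} = {..<q ^ (s - 1)} - ?Z" by auto
  finally show ?thesis by (simp add: card_Diff_subset subset_eq)
qed

lemma hdist_gray_R: "hdist (gray_R T g s u) (gray_R T g s w) = hom_weight (u - w)"
proof -
  define \<delta> where "\<delta> i = dg u ! i - dg w ! i" for i
  define Z where "Z = {m. m < q ^ (s - 1) \<and> g dvd gray_form (s - 1) \<delta> m + \<delta> (s - 1)}"
  have hd: "hdist (gray_R T g s u) (gray_R T g s w) = q ^ (s - 1) - card Z"
    unfolding hdist_gray_R_eq_card Z_def \<delta>_def ..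
  consider "u = w" | "u \<noteq> w" "g ^ (s - 1) dvd u - w" | "\<not> g ^ (s - 1) dvd u - w" by blast
  then show ?thesis
  proof cases
    case 1
    then have "Z = {..<q ^ (s - 1)}" unfolding Z_def \<delta>_def gray_form_def by auto
    then show ?thesis using hd 1 by (simp add: hom_weight_def)
  next
    case 2
    then have low: "\<forall>i<s - 1. \<delta> i = 0"
      unfolding \<delta>_def using power_pred_dvd_diff_iff_digits by simp
    have "\<not> g dvd \<delta> (s - 1)"
    proof
      assume "g dvd \<delta> (s - 1)"
      then have "\<forall>i<s. \<delta> i = 0" using low s_pos digit_dvd_diff_iff unfolding \<delta>_def
        by (metis less_antisym eq_iff_diff_eq_0 Suc_pred')
      then have "dg u = dg w" unfolding \<delta>_def by (intro nth_equalityI) auto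
      then show False using 2 digits_inj by blast
    qed
    then have "Z = {}" unfolding Z_def gray_form_def using low by simp
    then show ?thesis using hd 2 by (simp add: hom_weight_def)
  next
    case 3
    then obtain i where i: "i < s - 1" "\<not> g dvd \<delta> i"
      unfolding \<delta>_def using power_pred_dvd_diff_iff_digits digit_dvd_diff_iff by auto
    then have "card Z = q ^ (s - 2)"
      unfolding Z_def by (subst card_gray_form_zeros) (auto simp: numeral_2_eq_2)
    moreover have "u \<noteq> w" using 3 by auto
    ultimately show ?thesis using hd 3 by (simp add: hom_weight_def)
  qed
qed

lemma length_gray: "length (gray T g s x) = length x * q ^ (s - 1)"
  unfolding gray_def by (induction x) auto

lemma hdist_gray:
  "length x = length y \<Longrightarrow> hdist (gray T g s x) (gray T g s y) = (\<Sum>c<length x. hom_weight (x ! c - y ! c))"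
proof (induction x y rule: list_induct2)
  case Nil then show ?case unfolding gray_def hdist_def by simp
next
  case (Cons a x b y)
  then show ?case
    unfolding gray_def by (simp add: hdist_append hdist_gray_R sum.lessThan_Suc_shift del: sum.lessThan_Suc)
qed

lemma gray_replicate_zero: "gray T g s (replicate n 0) = replicate (n * q ^ (s - 1)) (residue g 0)"
proof -
  have "gray_R T g s 0 = replicate (q ^ (s - 1)) (residue g 0)"
    by (rule nth_equalityI) (simp_all add: gray_R_nth digits_zero gray_form_def s_pos)
  then show ?thesis
    unfolding gray_def by (induction n) (simp_all add: replicate_add[symmetric])
qed

lemma hom_weight_coset_sum: "(\<Sum>e\<in>set T. hom_weight (y + e * g ^ (s - 1))) = (q - 1) * q ^ (s - 1)"
proof (cases "g ^ (s - 1) dvd y")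
  case True
  then obtain t where t: "y = g ^ (s - 1) * t" by (rule dvdE)
  obtain e0 where e0: "e0 \<in> set T" "g dvd - t - e0" by (rule T_representative)
  have "y + e * g ^ (s - 1) = 0 \<longleftrightarrow> e = e0" if "e \<in> set T" for e
  proof -
    have "y + e * g ^ (s - 1) = g ^ (s - 1) * (t + e)" using t by (simp add: algebra_simps)
    then have "y + e * g ^ (s - 1) = 0 \<longleftrightarrow> g dvd t + e" using power_pred_mult_eq_0_iff by simp
    also have "\<dots> \<longleftrightarrow> g dvd e - e0"
      using e0(2) dvd_add_right_iff[of g "- t - e0" "t + e"] by (simp add: algebra_simps)
    also have "\<dots> \<longleftrightarrow> e = e0" using T_eq_if_dvd_diff that e0(1) by auto
    finally show ?thesis .
  qed
  moreover have "g ^ (s - 1) dvd y + e * g ^ (s - 1)" for e using True by simp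
  ultimately have "(\<Sum>e\<in>set T. hom_weight (y + e * g ^ (s - 1)))
      = (\<Sum>e\<in>set T. if e = e0 then 0 else q ^ (s - 1))"
    by (intro sum.cong) (auto simp: hom_weight_def)
  also have "\<dots> = (q - 1) * q ^ (s - 1)"
    using e0(1) length_T T_distinct by (simp add: sum.If_cases Diff_eq[symmetric] distinct_card)
  finally show ?thesis .
next
  case False
  then have "s \<ge> 2" using s_pos by (cases "s = 1") auto
  have "\<not> g ^ (s - 1) dvd y + e * g ^ (s - 1)" for e
    using False dvd_add_left_iff[of "g ^ (s - 1)" "e * g ^ (s - 1)" y] by simp
  then have "hom_weight (y + e * g ^ (s - 1)) = q ^ (s - 1) - q ^ (s - 2)" for e
    unfolding hom_weight_def by (metis dvd_0_right)
  then have "(\<Sum>e\<in>set T. hom_weight (y + e * g ^ (s - 1))) = q * (q ^ (s - 1) - q ^ (s - 2))"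
    using length_T T_distinct by (simp add: distinct_card)
  also have "\<dots> = (q - 1) * q ^ (s - 1)"
  proof -
    obtain s' where "s = Suc (Suc s')" using \<open>s \<ge> 2\<close> by (metis add_2_eq_Suc le_Suc_ex)
    then show ?thesis by (simp add: diff_mult_distrib diff_mult_distrib2 mult_ac)
  qed
  finally show ?thesis .
qed

text \<open>Summing the invariance over t in T turns the total into a sum of coset sums.\<close>
lemma sum_hom_weight_translation_invariant:
  assumes "finite L" and bij: "\<And>t. bij_betw (\<tau> t) L L"
    and shift: "\<And>t x. x \<in> L \<Longrightarrow> f (\<tau> t x) = f x + t * g ^ (s - 1)"
  shows "q * (\<Sum>x\<in>L. hom_weight (f x)) = card L * ((q - 1) * q ^ (s - 1))"
proof -
  have "q * (\<Sum>x\<in>L. hom_weight (f x)) = (\<Sum>e\<in>set T. \<Sum>x\<in>L. hom_weight (f (\<tau> e x)))"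
    using length_T T_distinct sum.reindex_bij_betw[OF bij, of "\<lambda>x. hom_weight (f x)"]
    by (simp add: distinct_card)
  also have "\<dots> = (\<Sum>x\<in>L. \<Sum>e\<in>set T. hom_weight (f x + e * g ^ (s - 1)))"
    using shift by (subst sum.swap) simp
  also have "\<dots> = card L * ((q - 1) * q ^ (s - 1))"
    using hom_weight_coset_sum by simp
  finally show ?thesis .
qed

lemma sum_hom_weight_lin_comb:
  assumes "i0 < k" "a i0 \<noteq> 0"
  shows "(\<Sum>x\<in>{x. length x = k}. hom_weight (lin_comb k a x)) = q ^ (s * k + s - 2) * (q - 1)"
proof -
  obtain x1 where x1: "length x1 = k" "lin_comb k a x1 = g ^ (s - 1)"
    using lin_comb_hits_power_pred[where a = a, OF assms] .
  define \<tau> where "\<tau> t x = map (\<lambda>i. x ! i + t * x1 ! i) [0..<k]" for t x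
  have inv: "\<tau> (- t) (\<tau> t x) = x" if "length x = k" for t x
    using that unfolding \<tau>_def by (intro nth_equalityI) auto
  have bij: "bij_betw (\<tau> t) {x. length x = k} {x. length x = k}" for t
  proof (rule bij_betw_byWitness[where f' = "\<tau> (- t)"])
    show "\<forall>x\<in>{x. length x = k}. \<tau> (- t) (\<tau> t x) = x" using inv by simp
    show "\<forall>x\<in>{x. length x = k}. \<tau> t (\<tau> (- t) x) = x" using inv[of _ "- t"] by simp
  qed (auto simp: \<tau>_def)
  have shift: "lin_comb k a (\<tau> t x) = lin_comb k a x + t * g ^ (s - 1)" for t x
    using x1(2) unfolding lin_comb_def \<tau>_def
    by (simp add: algebra_simps sum.distrib flip: sum_distrib_left)
  have "finite {x :: 'a list. length x = k}"
    using finite_lists_length_eq[of "UNIV :: 'a set" k] by simp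
  from sum_hom_weight_translation_invariant[OF this bij shift]
  have "q * (\<Sum>x\<in>{x. length x = k}. hom_weight (lin_comb k a x))
      = card {x :: 'a list. length x = k} * ((q - 1) * q ^ (s - 1))" .
  also have "card {x :: 'a list. length x = k} = q ^ (s * k)" by (rule card_lists_length)
  also have "q ^ (s * k) * ((q - 1) * q ^ (s - 1)) = q ^ (s * k + (s - 1)) * (q - 1)"
    by (simp add: power_add)
  also have "s * k + (s - 1) = Suc (s * k + s - 2)"
    using assms(1) s_pos by (cases k) auto
  finally have "q * (\<Sum>x\<in>{x. length x = k}. hom_weight (lin_comb k a x))
      = q * (q ^ (s * k + s - 2) * (q - 1))" by (simp only: power_Suc mult.assoc)
  then show ?thesis using q_ge_2 by simp
qed

section \<open>The code S_k and its Gray image\<close>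

definition column :: "nat \<Rightarrow> nat \<Rightarrow> 'a list" where
  "column k c = map (\<lambda>i. Gm (rho T g s) (q ^ s) k i c) [0..<k]"

lemma column_Suc: "column (Suc k) c = rho T g s (c div (q ^ s) ^ k) # column k (c mod (q ^ s) ^ k)"
  unfolding column_def upt_conv_Cons[OF zero_less_Suc] map_Suc_upt[symmetric]
  by (cases k) simp_all

lemma column_bij: "bij_betw (column k) {..<q ^ (s * k)} {xs. length xs = k}"
proof -
  have "column k ` {..<(q ^ s) ^ k} = {xs. length xs = k}"
  proof (induction k)
    case 0 then show ?case by (auto simp: column_def)
  next
    case (Suc k)
    let ?N = "q ^ s"
    have "column (Suc k) c \<in> {xs. length xs = Suc k}" for c by (simp add: column_def)
    moreover have "x # xs \<in> column (Suc k) ` {..<?N ^ Suc k}" if "length xs = k" for x xs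
    proof -
      have "xs \<in> column k ` {..<?N ^ k}" using Suc.IH that by simp
      then obtain c' where c': "c' < ?N ^ k" "xs = column k c'" by auto
      have "x \<in> rho T g s ` {0..<?N}" using rho_bij by (simp add: bij_betw_def)
      then obtain j where j: "j < ?N" "x = rho T g s j" by auto
      have "j * ?N ^ k + c' < Suc j * ?N ^ k" using c'(1) by simp
      also have "\<dots> \<le> ?N * ?N ^ k" using j(1) by (intro mult_right_mono) auto
      finally have "j * ?N ^ k + c' < ?N ^ Suc k" by (simp only: power_Suc)
      moreover have "column (Suc k) (j * ?N ^ k + c') = x # xs"
        using c' j q_ge_2 by (simp add: column_Suc)
      ultimately show ?thesis by (metis lessThan_iff rev_image_eqI)
    qed
    ultimately show ?case by (auto simp: length_Suc_conv)
  qed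
  moreover have "card {..<(q ^ s) ^ k} = card {xs :: 'a list. length xs = k}"
    by (simp add: card_lists_length power_mult)
  ultimately show ?thesis
    unfolding bij_betw_def power_mult by (metis eq_card_imp_inj_on finite_lessThan)
qed

definition codeword :: "nat \<Rightarrow> 'a list \<Rightarrow> 'a list" where
  "codeword k a = map (\<lambda>c. lin_comb k (\<lambda>i. a ! i) (column k c)) [0..<q ^ (s * k)]"

lemma length_codeword [simp]: "length (codeword k a) = q ^ (s * k)"
  unfolding codeword_def by simp

lemma codeword_nth: "c < q ^ (s * k) \<Longrightarrow> codeword k a ! c = lin_comb k (\<lambda>i. a ! i) (column k c)"
  unfolding codeword_def by simp

lemma S_mod_eq_codewords: "S_mod T g s k = codeword k ` {a. length a = k}"
proof -
  have "map (\<lambda>c. \<Sum>i<k. a i * Gm (rho T g s) (q ^ s) k i c) [0..<q ^ (s * k)]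
      = codeword k (map a [0..<k])" for a
    unfolding codeword_def lin_comb_def column_def by simp
  then have "S_mod T g s k = range (\<lambda>a. codeword k (map a [0..<k]))"
    unfolding S_mod_def by auto
  also have "\<dots> = codeword k ` {a. length a = k}"
  proof
    show "codeword k ` {a. length a = k} \<subseteq> range (\<lambda>a. codeword k (map a [0..<k]))"
    proof
      fix y assume "y \<in> codeword k ` {a. length a = k}"
      then obtain b where "length b = k" "y = codeword k b" by auto
      then have "y = codeword k (map (nth b) [0..<k])" by (metis map_nth)
      then show "y \<in> range (\<lambda>a. codeword k (map a [0..<k]))" by blast
    qed
  qed auto
  finally show ?thesis .
qed

lemma length_gray_codeword: "length (gray T g s (codeword k a)) = q ^ (s * k + s - 1)"
proof -
  have "s * k + s - 1 = s * k + (s - 1)" using s_pos by simp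
  then show ?thesis by (simp add: length_gray codeword_def power_add)
qed

lemma gray_codeword_zero:
  "gray T g s (codeword k (replicate k 0)) = replicate (q ^ (s * k + s - 1)) (residue g 0)"
proof -
  have "codeword k (replicate k 0) = replicate (q ^ (s * k)) 0"
    unfolding codeword_def lin_comb_def by (simp add: map_replicate_const)
  moreover have "s * k + s - 1 = s * k + (s - 1)" using s_pos by simp
  ultimately show ?thesis by (simp add: gray_replicate_zero power_add)
qed

lemma hdist_gray_codeword:
  assumes "length a = k" "length b = k" "a \<noteq> b"
  shows "hdist (gray T g s (codeword k a)) (gray T g s (codeword k b)) = q ^ (s * k + s - 2) * (q - 1)"
proof -
  obtain i0 where "i0 < k" "a ! i0 \<noteq> b ! i0" using assms by (auto simp: list_eq_iff_nth_eq)
  then have i0: "i0 < k" "a ! i0 - b ! i0 \<noteq> 0" by simp_all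
  have "hdist (gray T g s (codeword k a)) (gray T g s (codeword k b))
      = (\<Sum>c<q ^ (s * k). hom_weight (codeword k a ! c - codeword k b ! c))"
    using hdist_gray[of "codeword k a" "codeword k b"] by simp
  also have "\<dots> = (\<Sum>c<q ^ (s * k). hom_weight (lin_comb k (\<lambda>i. a ! i - b ! i) (column k c)))"
    by (intro sum.cong refl) (simp only: lessThan_iff codeword_nth lin_comb_diff)
  also have "\<dots> = (\<Sum>x\<in>{x. length x = k}. hom_weight (lin_comb k (\<lambda>i. a ! i - b ! i) x))"
    using sum.reindex_bij_betw[OF column_bij] .
  also have "\<dots> = q ^ (s * k + s - 2) * (q - 1)"
    using sum_hom_weight_lin_comb[where a = "\<lambda>i. a ! i - b ! i", OF i0] .
  finally show ?thesis .
qed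

lemma gray_code_length: "c \<in> gray T g s ` S_mod T g s k \<Longrightarrow> length c = q ^ (s * k + s - 1)"
  by (auto simp: S_mod_eq_codewords length_gray_codeword)

lemma gray_code_equidistant:
  assumes "c \<in> gray T g s ` S_mod T g s k" "d \<in> gray T g s ` S_mod T g s k" "c \<noteq> d"
  shows "hdist c d = q ^ (s * k + s - 2) * (q - 1)"
proof -
  obtain a b where ab: "length a = k" "length b = k"
      "c = gray T g s (codeword k a)" "d = gray T g s (codeword k b)"
    using assms(1,2) unfolding S_mod_eq_codewords by auto
  then have "a \<noteq> b" using assms(3) by auto
  then show ?thesis using hdist_gray_codeword ab by simp
qed

lemma card_gray_code: "card (gray T g s ` S_mod T g s k) = q ^ (s * k)"
proof -
  have "inj_on (\<lambda>a. gray T g s (codeword k a)) {a. length a = k}"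
  proof (rule inj_onI, rule ccontr)
    fix a b
    assume "a \<in> {a. length a = k}" "b \<in> {a. length a = k}" "a \<noteq> b"
      and same: "gray T g s (codeword k a) = gray T g s (codeword k b)"
    then have "hdist (gray T g s (codeword k a)) (gray T g s (codeword k b))
        = q ^ (s * k + s - 2) * (q - 1)"
      by (intro hdist_gray_codeword) auto
    then have "q ^ (s * k + s - 2) * (q - 1) = 0" unfolding same hdist_self by simp
    then show False using q_ge_2 by simp
  qed
  then show ?thesis
    unfolding S_mod_eq_codewords image_image by (simp add: card_image card_lists_length)
qed

lemma zero_in_gray_code: "replicate (q ^ (s * k + s - 1)) (residue g 0) \<in> gray T g s ` S_mod T g s k"
  unfolding S_mod_eq_codewords gray_codeword_zero[of k, symmetric] by auto

end

theorem theorem3p16: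
  fixes g :: "'a::{comm_ring_1,finite}" and T :: "'a list" and s k :: nat
  assumes chain: "chain_ring TYPE('a)"
    and maxg: "is_maximal_ideal (principal_ideal g)"
    and s_nil: "g ^ s = 0" and s_least: "\<forall>i<s. g ^ i \<noteq> 0"
    and T_dist: "distinct T"
    and T_reps: "\<forall>r. \<exists>!e. e \<in> set T \<and> residue g e = residue g r"
    and T0: "T ! 0 = 0" and T1: "T ! 1 = 1"
    and k1: "k \<ge> 1"
  shows "(\<forall>c \<in> gray T g s ` S_mod T g s k. length c = resq g ^ (s * (k + 1) - 1))
       \<and> card (gray T g s ` S_mod T g s k) = resq g ^ (s * k)
       \<and> min_dist (gray T g s ` S_mod T g s k) = resq g ^ (s * (k + 1) - 2) * (resq g - 1)
       \<and> (\<forall>X Y :: real. weight_enum (residue g 0) (gray T g s ` S_mod T g s k) (resq g ^ (s * (k + 1) - 1)) X Y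
            = real (resq g ^ (s * k) - 1)
                * X ^ (resq g ^ (s * (k + 1) - 1) - resq g ^ (s * (k + 1) - 2) * (resq g - 1))
                * Y ^ (resq g ^ (s * (k + 1) - 2) * (resq g - 1))
              + X ^ (resq g ^ (s * (k + 1) - 1)))"
proof -
  interpret chain_ring_digits g s T
    using chain_ring_nonmultiple_dvd_one[OF chain maxg] s_nil s_least T_dist T_reps T0
    by unfold_locales auto
  let ?C = "gray T g s ` S_mod T g s k" and ?z = "replicate (q ^ (s * k + s - 1)) (residue g 0)"
    and ?w = "q ^ (s * k + s - 2) * (q - 1)"
  have exps: "s * (k + 1) - 1 = s * k + s - 1" "s * (k + 1) - 2 = s * k + s - 2" by simp_all
  have "1 < card ?C"
    unfolding card_gray_code using q_ge_2 k1 s_pos by (intro one_less_power) auto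
  then have fin: "finite ?C" by (intro card_ge_0_finite) simp
  obtain c where c: "c \<in> ?C" "c \<noteq> ?z"
    using \<open>1 < card ?C\<close> card_mono[of "{?z}" ?C] by auto
  have len: "\<forall>c\<in>?C. length c = q ^ (s * k + s - 1)" using gray_code_length by blast
  have "s \<le> s * k" using k1 by simp
  then have "s * k + s - 1 = Suc (s * k + s - 2)" using s_pos by linarith
  then have "?w \<le> q ^ (s * k + s - 1)" by (simp add: mult_le_mono2)
  then have weight: "0 < ?w" "?w \<le> q ^ (s * k + s - 1)" using q_ge_2 by simp_all
  show ?thesis
    using len card_gray_code min_dist_equidistant[OF c(1) zero_in_gray_code c(2) gray_code_equidistant]
      weight_enum_equidistant[OF fin zero_in_gray_code len gray_code_equidistant weight]
    unfolding exps by simp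
qed

end
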